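(* Let $\tau$ be a $\sigma$-maxitive measure on a $\sigma$-algebra $\mathcal{B}$ of subsets of a nonempty set $E$. Then the following are equivalent: - $\tau$ has the Radon–Nikodym property with respect to the Sugeno integral, i.e. for every $\sigma$-maxitive measure $\nu$ on $\mathcal{B}$ with $\nu\ll_\wedge\tau$ there is a $\mathcal{B}$-measurable $c:E\to[0,\infty]$ with $\nu(B)=\sup_{t\ge0}\min\big(t,\tau(B\cap\{c>t\})\big)$ for all $B\in\mathcal{B}$; - $\tau$ is $\sigma$-principal.
   Context: A $\sigma$-maxitive measure on $\mathcal{B}$ is a map $\nu:\mathcal{B}\to[0,\infty]$ with $\nu(\emptyset)=0$ and $\nu(\bigcup_j B_j)=\sup_j\nu(B_j)$ for every countable family $(B_j)$ in $\mathcal{B}$. A map $f:E\to[0,\infty]$ is $\mathcal{B}$-measurable if $\{f>t\}\in\mathcal{B}$ for all $t\in[0,\infty)$. Here the pseudo-multiplication is $\odot=\min$, whose identity is $\infty$; every element of $[0,\infty]$ is $\odot$-finite in this case. Absolute continuity $\nu\ll_\wedge\tau$ means $\nu(B)\le\min(\infty,\tau(B))=\tau(B)$ for all $B\in\mathcal{B}$. A $\sigma$-ideal of $\mathcal{B}$ is a nonempty subfamily closed under countable unions and under passing to measurable subsets. A set is $\tau$-negligible if it is contained in some $B\in\mathcal{B}$ with $\tau(B)=0$. $\tau$ is $\sigma$-principal if for every $\sigma$-ideal $\mathcal{I}$ of $\mathcal{B}$ there is $L\in\mathcal{I}$ such that $S\setminus L$ is $\tau$-negligible for all $S\in\mathcal{I}$.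 *)

theory Defs
  imports "HOL-Analysis.Analysis"
begin

definition sigma_maxitive :: "'a set set \<Rightarrow> ('a set \<Rightarrow> ennreal) \<Rightarrow> bool" where
  "sigma_maxitive BB \<nu> \<longleftrightarrow>
     \<nu> {} = 0 \<and>
     (\<forall>C. countable C \<and> C \<subseteq> BB \<longrightarrow> \<nu> (\<Union>C) = (SUP B\<in>C. \<nu> B))"

definition B_measurable :: "'a set \<Rightarrow> 'a set set \<Rightarrow> ('a \<Rightarrow> ennreal) \<Rightarrow> bool" where
  "B_measurable E BB c \<longleftrightarrow> (\<forall>t::real. t \<ge> 0 \<longrightarrow> {x\<in>E. ennreal t < c x} \<in> BB)"

text \<open>Absolute continuity with respect to \<odot> = min (identity \<infinity>).\<close>
definition abs_cont_min :: "'a set set \<Rightarrow> ('a set \<Rightarrow> ennreal) \<Rightarrow> ('a set \<Rightarrow> ennreal) \<Rightarrow> bool" where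
  "abs_cont_min BB \<nu> \<tau> \<longleftrightarrow> (\<forall>B\<in>BB. \<nu> B \<le> min \<infinity> (\<tau> B))"

definition has_sugeno_density ::
  "'a set \<Rightarrow> 'a set set \<Rightarrow> ('a set \<Rightarrow> ennreal) \<Rightarrow> ('a set \<Rightarrow> ennreal) \<Rightarrow> ('a \<Rightarrow> ennreal) \<Rightarrow> bool" where
  "has_sugeno_density E BB \<nu> \<tau> c \<longleftrightarrow>
     (\<forall>B\<in>BB. \<nu> B = (SUP t\<in>{t::real. t \<ge> 0}. min (ennreal t) (\<tau> (B \<inter> {x\<in>E. ennreal t < c x}))))"

definition radon_nikodym_sugeno :: "'a set \<Rightarrow> 'a set set \<Rightarrow> ('a set \<Rightarrow> ennreal) \<Rightarrow> bool" where
  "radon_nikodym_sugeno E BB \<tau> \<longleftrightarrow>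
     (\<forall>\<nu>. sigma_maxitive BB \<nu> \<and> abs_cont_min BB \<nu> \<tau> \<longrightarrow>
        (\<exists>c. B_measurable E BB c \<and> has_sugeno_density E BB \<nu> \<tau> c))"

definition sigma_ideal :: "'a set set \<Rightarrow> 'a set set \<Rightarrow> bool" where
  "sigma_ideal BB I \<longleftrightarrow>
     I \<noteq> {} \<and> I \<subseteq> BB \<and>
     (\<forall>C. countable C \<and> C \<subseteq> I \<longrightarrow> \<Union>C \<in> I) \<and>
     (\<forall>S\<in>I. \<forall>A\<in>BB. A \<subseteq> S \<longrightarrow> A \<in> I)"

definition negligible_wrt :: "'a set set \<Rightarrow> ('a set \<Rightarrow> ennreal) \<Rightarrow> 'a set \<Rightarrow> bool" where
  "negligible_wrt BB \<tau> S \<longleftrightarrow> (\<exists>B\<in>BB. S \<subseteq> B \<and> \<tau> B = 0)"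

definition sigma_principal :: "'a set set \<Rightarrow> ('a set \<Rightarrow> ennreal) \<Rightarrow> bool" where
  "sigma_principal BB \<tau> \<longleftrightarrow>
     (\<forall>I. sigma_ideal BB I \<longrightarrow> (\<exists>L\<in>I. \<forall>S\<in>I. negligible_wrt BB \<tau> (S - L)))"

end

theory Submission
  imports Defs
begin

text \<open>
  Given a \<sigma>-ideal I, the measure \<nu> B = inf over S \<in> I of \<tau> (B - S) is \<sigma>-maxitive, dominated
  by \<tau> and vanishes on I, and its infimum is attained. If c is a density of \<nu>, then \<nu> B = 0 iff
  \<tau> (B \<inter> {c > 0}) = 0, so every L \<in> I with \<tau> ({c = 0} - L) = 0 is principal.
  Conversely, for \<sigma>-principal \<tau> and \<nu> \<le> \<tau>, the sublevel ideals {\<nu> \<le> q} (q rational) have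
  principal sets L q; with M q the union of the L r for r \<le> q, a density of \<nu> is
  c x = inf {q | x \<in> M q}.
\<close>

lemma sigma_maxitive_empty: "sigma_maxitive BB \<nu> \<Longrightarrow> \<nu> {} = 0"
  unfolding sigma_maxitive_def by blast

lemma sigma_maxitive_Union:
  "sigma_maxitive BB \<nu> \<Longrightarrow> countable C \<Longrightarrow> C \<subseteq> BB \<Longrightarrow> \<nu> (\<Union>C) = (SUP B\<in>C. \<nu> B)"
  unfolding sigma_maxitive_def by blast

lemma sigma_maxitive_UN:
  assumes "sigma_maxitive BB \<nu>" "countable X" "f ` X \<subseteq> BB"
  shows "\<nu> (\<Union>x\<in>X. f x) = (SUP x\<in>X. \<nu> (f x))"
  using sigma_maxitive_Union[OF assms(1) countable_image[OF assms(2)] assms(3)]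
  by (simp add: image_image)

lemma sigma_maxitive_Un:
  assumes "sigma_maxitive BB \<nu>" "A \<in> BB" "B \<in> BB"
  shows "\<nu> (A \<union> B) = max (\<nu> A) (\<nu> B)"
proof -
  have "\<nu> (\<Union>{A, B}) = (SUP C\<in>{A, B}. \<nu> C)"
    using assms by (intro sigma_maxitive_Union) auto
  thus ?thesis by (simp add: sup_max)
qed

lemma sigma_maxitive_mono:
  assumes "sigma_maxitive BB \<nu>" "A \<in> BB" "B \<in> BB" "A \<subseteq> B"
  shows "\<nu> A \<le> \<nu> B"
  using sigma_maxitive_Un[OF assms(1-3)] assms(4) by (metis Un_absorb1 max.cobounded1)

lemma sigma_ideal_Union: "sigma_ideal BB I \<Longrightarrow> countable C \<Longrightarrow> C \<subseteq> I \<Longrightarrow> \<Union>C \<in> I"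
  by (simp add: sigma_ideal_def)

lemma sigma_ideal_UN:
  assumes "sigma_ideal BB I" "countable X" "f ` X \<subseteq> I"
  shows "(\<Union>x\<in>X. f x) \<in> I"
  using sigma_ideal_Union[OF assms(1) countable_image[OF assms(2)] assms(3)] .

lemma sigma_ideal_sets: "sigma_ideal BB I \<Longrightarrow> S \<in> I \<Longrightarrow> S \<in> BB"
  by (auto simp: sigma_ideal_def)

lemma sigma_ideal_empty: "sigma_ideal BB I \<Longrightarrow> {} \<in> BB \<Longrightarrow> {} \<in> I"
  by (auto simp: sigma_ideal_def)

lemma sigma_ideal_sublevel:
  assumes "sigma_algebra E BB" "sigma_maxitive BB \<nu>"
  shows "sigma_ideal BB {S\<in>BB. \<nu> S \<le> a}"
proof -
  interpret sigma_algebra E BB by fact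
  have "{} \<in> {S\<in>BB. \<nu> S \<le> a}" using sigma_maxitive_empty[OF assms(2)] by simp
  moreover have "\<Union>C \<in> {S\<in>BB. \<nu> S \<le> a}" if C: "countable C" "C \<subseteq> {S\<in>BB. \<nu> S \<le> a}" for C
  proof -
    have "\<nu> (\<Union>C) = (SUP B\<in>C. \<nu> B)" using C by (intro sigma_maxitive_Union[OF assms(2)]) auto
    also have "\<dots> \<le> a" using C by (intro SUP_least) auto
    finally show ?thesis using C by (auto intro: countable_Union)
  qed
  moreover have "A \<in> {S\<in>BB. \<nu> S \<le> a}" if "S \<in> {S\<in>BB. \<nu> S \<le> a}" "A \<in> BB" "A \<subseteq> S" for S A
    using that sigma_maxitive_mono[OF assms(2), of A S] by auto
  ultimately show ?thesis unfolding sigma_ideal_def by blast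
qed

definition ideal_residual :: "'a set set \<Rightarrow> ('a set \<Rightarrow> ennreal) \<Rightarrow> 'a set \<Rightarrow> ennreal" where
  "ideal_residual I \<tau> B = (INF S\<in>I. \<tau> (B - S))"

context
  fixes E :: "'a set" and BB :: "'a set set" and \<tau> :: "'a set \<Rightarrow> ennreal" and I :: "'a set set"
  assumes sa: "sigma_algebra E BB" and tm: "sigma_maxitive BB \<tau>" and I: "sigma_ideal BB I"
begin

interpretation sigma_algebra E BB by (rule sa)

lemma ideal_residual_attained:
  assumes B: "B \<in> BB"
  shows "\<exists>S\<in>I. ideal_residual I \<tau> B = \<tau> (B - S)"
proof -
  have "I \<noteq> {}" using sigma_ideal_empty[OF I empty_sets] by blast
  then obtain f :: "nat \<Rightarrow> ennreal" where f: "range f \<subseteq> (\<lambda>S. \<tau> (B - S)) ` I"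
      "ideal_residual I \<tau> B = (INF i. f i)"
    using ennreal_Inf_countable_INF[of "(\<lambda>S. \<tau> (B - S)) ` I"]
    unfolding ideal_residual_def by blast
  hence "\<forall>n. \<exists>S\<in>I. f n = \<tau> (B - S)" by blast
  then obtain g where g: "\<And>n. g n \<in> I" "\<And>n. f n = \<tau> (B - g n)" by metis
  define S where "S = (\<Union>n. g n)"
  have SI: "S \<in> I" unfolding S_def using g(1) by (intro sigma_ideal_UN[OF I]) auto
  have "\<tau> (B - S) \<le> f n" for n
    unfolding g(2) using g(1) B SI sigma_ideal_sets[OF I]
    by (intro sigma_maxitive_mono[OF tm]) (auto simp: S_def)
  hence "\<tau> (B - S) \<le> ideal_residual I \<tau> B" unfolding f(2) by (simp add: le_INF_iff)
  moreover have "ideal_residual I \<tau> B \<le> \<tau> (B - S)"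
    unfolding ideal_residual_def by (rule INF_lower[OF SI])
  ultimately show ?thesis using SI by (intro bexI[of _ S]) auto
qed

lemma ideal_residual_mono:
  assumes "A \<in> BB" "B \<in> BB" "A \<subseteq> B"
  shows "ideal_residual I \<tau> A \<le> ideal_residual I \<tau> B"
  unfolding ideal_residual_def
proof (rule INF_mono)
  fix S assume S: "S \<in> I"
  hence "\<tau> (A - S) \<le> \<tau> (B - S)"
    using assms sigma_ideal_sets[OF I S] by (intro sigma_maxitive_mono[OF tm]) auto
  thus "\<exists>S'\<in>I. \<tau> (A - S') \<le> \<tau> (B - S)" using S by blast
qed

lemma ideal_residual_eq_0: "S \<in> I \<Longrightarrow> ideal_residual I \<tau> S = 0"
  using INF_lower[of S I "\<lambda>S'. \<tau> (S - S')"] sigma_maxitive_empty[OF tm]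
  unfolding ideal_residual_def by simp

lemma abs_cont_min_ideal_residual: "abs_cont_min BB (ideal_residual I \<tau>) \<tau>"
  unfolding abs_cont_min_def
proof
  fix B
  have "ideal_residual I \<tau> B \<le> \<tau> (B - {})"
    unfolding ideal_residual_def by (rule INF_lower[OF sigma_ideal_empty[OF I empty_sets]])
  thus "ideal_residual I \<tau> B \<le> min \<infinity> (\<tau> B)" by simp
qed

lemma sigma_maxitive_ideal_residual: "sigma_maxitive BB (ideal_residual I \<tau>)"
  unfolding sigma_maxitive_def
proof (intro conjI allI impI)
  show "ideal_residual I \<tau> {} = 0"
    using ideal_residual_eq_0 sigma_ideal_empty[OF I empty_sets] by blast
  fix C assume C: "countable C \<and> C \<subseteq> BB"
  have "\<forall>B\<in>C. \<exists>S\<in>I. ideal_residual I \<tau> B = \<tau> (B - S)"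
    using ideal_residual_attained C by blast
  then obtain h where h: "\<And>B. B \<in> C \<Longrightarrow> h B \<in> I"
      "\<And>B. B \<in> C \<Longrightarrow> ideal_residual I \<tau> B = \<tau> (B - h B)"
    by metis
  define S where "S = (\<Union>B\<in>C. h B)"
  have SI: "S \<in> I" unfolding S_def using h(1) C by (intro sigma_ideal_UN[OF I]) auto
  have SB: "S \<in> BB" using sigma_ideal_sets[OF I SI] .
  have "ideal_residual I \<tau> (\<Union>C) \<le> \<tau> (\<Union>C - S)"
    unfolding ideal_residual_def by (rule INF_lower[OF SI])
  also have "\<Union>C - S = (\<Union>B\<in>C. B - S)" by blast
  also have "\<tau> (\<Union>B\<in>C. B - S) = (SUP B\<in>C. \<tau> (B - S))"
    using C SB by (intro sigma_maxitive_UN[OF tm]) auto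
  also have "\<dots> \<le> (SUP B\<in>C. ideal_residual I \<tau> B)"
  proof (rule SUP_mono)
    fix B assume B: "B \<in> C"
    have "\<tau> (B - S) \<le> \<tau> (B - h B)"
      using B C SB sigma_ideal_sets[OF I h(1)[OF B]]
      by (intro sigma_maxitive_mono[OF tm]) (auto simp: S_def)
    thus "\<exists>B'\<in>C. \<tau> (B - S) \<le> ideal_residual I \<tau> B'"
      using h(2)[OF B] B by (intro bexI[of _ B]) auto
  qed
  finally show "ideal_residual I \<tau> (\<Union>C) = (SUP B\<in>C. ideal_residual I \<tau> B)"
    using C by (intro antisym SUP_least ideal_residual_mono) auto
qed

end

lemma B_measurable_Int:
  assumes "sigma_algebra E BB" "B_measurable E BB c" "B \<in> BB" "0 \<le> t"
  shows "B \<inter> {x\<in>E. ennreal t < c x} \<in> BB"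
proof -
  interpret sigma_algebra E BB by fact
  show ?thesis using assms unfolding B_measurable_def by blast
qed

lemma positive_set_eq_UN:
  "{x\<in>E. 0 < c x} = (\<Union>n. {x\<in>E. ennreal (inverse (real (Suc n))) < (c x :: ennreal)})"
proof (intro set_eqI iffI)
  fix x assume x: "x \<in> {x\<in>E. 0 < c x}"
  then obtain w where w: "0 < w" "w < c x" using dense by blast
  then obtain r where r: "w = ennreal r" "0 < r"
    by (cases w) (auto simp: top_unique less_imp_le)
  then obtain n where n: "inverse (real (Suc n)) < r" using reals_Archimedean by blast
  have "ennreal (inverse (real (Suc n))) < c x"
    using n r w(2) by (metis ennreal_lessI less_trans)
  thus "x \<in> (\<Union>n. {x\<in>E. ennreal (inverse (real (Suc n))) < c x})" using x by auto
qed (auto intro: le_less_trans[OF zero_le])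

lemma has_sugeno_density_eq_0_iff:
  assumes sa: "sigma_algebra E BB" and tm: "sigma_maxitive BB \<tau>"
    and cm: "B_measurable E BB c" and cd: "has_sugeno_density E BB \<nu> \<tau> c" and B: "B \<in> BB"
  shows "\<nu> B = 0 \<longleftrightarrow> \<tau> (B \<inter> {x\<in>E. 0 < c x}) = 0"
proof -
  have D: "B \<inter> {x\<in>E. ennreal t < c x} \<in> BB" if "0 \<le> t" for t
    using B_measurable_Int[OF sa cm B that] .
  have \<nu>B: "\<nu> B = (SUP t\<in>{t::real. t \<ge> 0}. min (ennreal t) (\<tau> (B \<inter> {x\<in>E. ennreal t < c x})))"
    using cd B unfolding has_sugeno_density_def by blast
  show ?thesis
  proof
    assume "\<nu> B = 0"
    have "\<tau> (B \<inter> {x\<in>E. ennreal t < c x}) = 0" if t: "0 < t" for t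
    proof -
      have "min (ennreal t) (\<tau> (B \<inter> {x\<in>E. ennreal t < c x})) \<le> \<nu> B"
        unfolding \<nu>B using t by (intro SUP_upper) auto
      thus ?thesis using t \<open>\<nu> B = 0\<close> by (simp add: min_def split: if_splits)
    qed
    moreover have "\<tau> (B \<inter> {x\<in>E. 0 < c x}) =
        (SUP n. \<tau> (B \<inter> {x\<in>E. ennreal (inverse (real (Suc n))) < c x}))"
      unfolding positive_set_eq_UN[of E c] Int_UN_distrib
      using D by (intro sigma_maxitive_UN[OF tm]) auto
    ultimately show "\<tau> (B \<inter> {x\<in>E. 0 < c x}) = 0" by simp
  next
    assume \<tau>0: "\<tau> (B \<inter> {x\<in>E. 0 < c x}) = 0"
    have "min (ennreal t) (\<tau> (B \<inter> {x\<in>E. ennreal t < c x})) = 0" if "0 \<le> t" for t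
    proof -
      have "\<tau> (B \<inter> {x\<in>E. ennreal t < c x}) \<le> \<tau> (B \<inter> {x\<in>E. 0 < c x})"
        using D[OF that] D[of 0] by (intro sigma_maxitive_mono[OF tm])
          (auto intro: le_less_trans[OF zero_le])
      thus ?thesis using \<tau>0 by simp
    qed
    hence "\<nu> B \<le> 0" unfolding \<nu>B by (intro SUP_least) auto
    thus "\<nu> B = 0" by simp
  qed
qed

lemma sigma_principal_if_radon_nikodym_sugeno:
  assumes sa: "sigma_algebra E BB" and tm: "sigma_maxitive BB \<tau>"
    and rn: "radon_nikodym_sugeno E BB \<tau>"
  shows "sigma_principal BB \<tau>"
  unfolding sigma_principal_def
proof (intro allI impI)
  interpret sigma_algebra E BB by (rule sa)
  fix I assume I: "sigma_ideal BB I"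
  let ?\<nu> = "ideal_residual I \<tau>"
  obtain c where cm: "B_measurable E BB c" and cd: "has_sugeno_density E BB ?\<nu> \<tau> c"
    using rn sigma_maxitive_ideal_residual[OF sa tm I] abs_cont_min_ideal_residual[OF sa tm I]
    unfolding radon_nikodym_sugeno_def by blast
  define P where "P = {x\<in>E. 0 < c x}"
  have "{x\<in>E. ennreal 0 < c x} \<in> BB" using cm unfolding B_measurable_def by blast
  hence PB: "P \<in> BB" by (simp add: P_def)
  have "?\<nu> (E - P) = 0"
    using has_sugeno_density_eq_0_iff[OF sa tm cm cd, of "E - P"] PB sigma_maxitive_empty[OF tm]
    by (simp add: P_def Diff_Int_distrib2 compl_sets)
  then obtain L where L: "L \<in> I" "\<tau> (E - P - L) = 0"
    using ideal_residual_attained[OF sa tm I, of "E - P"] PB by auto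
  show "\<exists>L\<in>I. \<forall>S\<in>I. negligible_wrt BB \<tau> (S - L)"
  proof (intro bexI[OF _ L(1)] ballI)
    fix S assume S: "S \<in> I"
    have SB: "S \<in> BB" and LB: "L \<in> BB" using sigma_ideal_sets[OF I] S L(1) by auto
    have "\<tau> (S \<inter> P) = 0"
      using has_sugeno_density_eq_0_iff[OF sa tm cm cd SB] ideal_residual_eq_0[OF sa tm I S]
      by (simp add: P_def)
    hence "\<tau> ((S \<inter> P) \<union> (E - P - L)) = 0"
      using SB PB LB L(2) by (subst sigma_maxitive_Un[OF tm]) auto
    moreover have "S - L \<subseteq> (S \<inter> P) \<union> (E - P - L)" using sets_into_space[OF SB] by auto
    ultimately show "negligible_wrt BB \<tau> (S - L)"
      using SB PB LB unfolding negligible_wrt_def by blast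
  qed
qed

lemma le_ennreal_if_le_Rats_greater:
  fixes z :: ennreal
  assumes "0 \<le> t" "\<And>s. s \<in> \<rat> \<Longrightarrow> t < s \<Longrightarrow> z \<le> ennreal s"
  shows "z \<le> ennreal t"
proof (rule ccontr)
  assume "\<not> z \<le> ennreal t"
  hence "ennreal t < z" by simp
  then obtain w where w: "ennreal t < w" "w < z" using dense by blast
  hence "w \<noteq> top" using top_greatest[of z] by auto
  then obtain r where r: "w = ennreal r" "0 \<le> r" by (cases w) auto
  have "t < r" using w(1) r assms(1) by (simp add: ennreal_less_iff)
  then obtain s where s: "s \<in> \<rat>" "t < s" "s < r" using Rats_dense_in_real by blast
  have "z \<le> ennreal s" using assms(2) s by blast
  also have "\<dots> < w" using s r assms(1) by (simp add: ennreal_less_iff)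
  finally show False using w(2) by simp
qed

definition rational_level_fun :: "(real \<Rightarrow> 'a set) \<Rightarrow> 'a \<Rightarrow> ennreal" where
  "rational_level_fun M x = (INF q\<in>{q\<in>\<rat>. 0 \<le> q \<and> x \<in> M q}. ennreal q)"

lemma rational_level_fun_le:
  "q \<in> \<rat> \<Longrightarrow> 0 \<le> q \<Longrightarrow> x \<in> M q \<Longrightarrow> rational_level_fun M x \<le> ennreal q"
  unfolding rational_level_fun_def by (rule INF_lower) auto

lemma rational_level_fun_less_imp_mem:
  assumes "mono M" "rational_level_fun M x < ennreal s"
  shows "x \<in> M s"
proof -
  obtain q where q: "q \<in> \<rat>" "0 \<le> q" "x \<in> M q" "ennreal q < ennreal s"
    using assms(2) unfolding rational_level_fun_def INF_less_iff by blast
  hence "q \<le> s" using ennreal_less_iff not_le by fastforce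
  thus ?thesis using q(3) monoD[OF assms(1)] by blast
qed

lemma rational_level_fun_le_iff:
  assumes "mono M" "0 \<le> t"
  shows "rational_level_fun M x \<le> ennreal t \<longleftrightarrow> (\<forall>s\<in>\<rat>. t < s \<longrightarrow> x \<in> M s)"
proof
  assume le: "rational_level_fun M x \<le> ennreal t"
  show "\<forall>s\<in>\<rat>. t < s \<longrightarrow> x \<in> M s"
  proof (intro ballI impI)
    fix s assume "t < s"
    hence "ennreal t < ennreal s" using assms(2) by (simp add: ennreal_less_iff)
    with le have "rational_level_fun M x < ennreal s" by (rule le_less_trans)
    thus "x \<in> M s" by (rule rational_level_fun_less_imp_mem[OF assms(1)])
  qed
next
  assume A: "\<forall>s\<in>\<rat>. t < s \<longrightarrow> x \<in> M s"
  show "rational_level_fun M x \<le> ennreal t"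
  proof (rule le_ennreal_if_le_Rats_greater[OF assms(2)])
    fix s assume "s \<in> \<rat>" "t < s"
    thus "rational_level_fun M x \<le> ennreal s"
      using A assms(2) by (intro rational_level_fun_le) auto
  qed
qed

lemma B_measurable_rational_level_fun:
  assumes "sigma_algebra E BB" "mono M" "\<And>q. M q \<in> BB"
  shows "B_measurable E BB (rational_level_fun M)"
  unfolding B_measurable_def
proof (intro allI impI)
  interpret sigma_algebra E BB by fact
  fix t :: real assume t: "0 \<le> t"
  have "{x\<in>E. ennreal t < rational_level_fun M x} = (\<Union>s\<in>{s\<in>\<rat>. t < s}. E - M s)"
    using rational_level_fun_le_iff[OF assms(2) t] by (auto simp: not_le[symmetric])
  also have "\<dots> \<in> BB"
    using assms(3) by (intro countable_UN' countable_subset[OF _ countable_rat]) auto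
  finally show "{x\<in>E. ennreal t < rational_level_fun M x} \<in> BB" .
qed

context
  fixes E :: "'a set" and BB :: "'a set set" and \<tau> \<nu> :: "'a set \<Rightarrow> ennreal"
    and M :: "real \<Rightarrow> 'a set"
  assumes sa: "sigma_algebra E BB" and tm: "sigma_maxitive BB \<tau>" and nm: "sigma_maxitive BB \<nu>"
    and ac: "\<And>B. B \<in> BB \<Longrightarrow> \<nu> B \<le> \<tau> B"
    and M_mono: "mono M" and M_sets: "\<And>q. M q \<in> BB" and M_bound: "\<And>q. \<nu> (M q) \<le> ennreal q"
    and M_exhausts: "\<And>q S. q \<in> \<rat> \<Longrightarrow> 0 \<le> q \<Longrightarrow> S \<in> BB \<Longrightarrow> \<nu> S \<le> ennreal q \<Longrightarrow>
      negligible_wrt BB \<tau> (S - M q)"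
begin

interpretation sigma_algebra E BB by (rule sa)

lemma rational_level_fun_superlevel_sets:
  "B \<in> BB \<Longrightarrow> 0 \<le> t \<Longrightarrow> B \<inter> {x\<in>E. ennreal t < rational_level_fun M x} \<in> BB"
  by (rule B_measurable_Int[OF sa B_measurable_rational_level_fun[OF sa M_mono M_sets]])

lemma sugeno_integral_rational_level_fun_le:
  assumes B: "B \<in> BB"
  shows "(SUP t\<in>{t::real. t \<ge> 0}.
      min (ennreal t) (\<tau> (B \<inter> {x\<in>E. ennreal t < rational_level_fun M x}))) \<le> \<nu> B"
proof (rule SUP_least)
  fix t :: real assume t: "t \<in> {t. t \<ge> 0}"
  let ?D = "B \<inter> {x\<in>E. ennreal t < rational_level_fun M x}"
  show "min (ennreal t) (\<tau> ?D) \<le> \<nu> B"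
  proof (cases "ennreal t \<le> \<nu> B")
    case False
    then obtain r where r: "\<nu> B = ennreal r" "0 \<le> r" "r < t"
      by (cases "\<nu> B") (auto simp: ennreal_less_iff)
    then obtain q where q: "q \<in> \<rat>" "r < q" "q < t" using Rats_dense_in_real by blast
    have "\<nu> B \<le> ennreal q" using r(1) q(2) by (simp add: ennreal_leI)
    then obtain N where N: "N \<in> BB" "B - M q \<subseteq> N" "\<tau> N = 0"
      using M_exhausts[OF q(1) _ B] r(2) q(2) unfolding negligible_wrt_def by force
    have "?D \<subseteq> B - M q"
    proof
      fix x assume x: "x \<in> ?D"
      have "x \<notin> M q"
      proof
        assume "x \<in> M q"
        hence "rational_level_fun M x \<le> ennreal q"
          using q r by (intro rational_level_fun_le) auto
        also have "\<dots> \<le> ennreal t" using q by (intro ennreal_leI) auto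
        finally show False using x by auto
      qed
      thus "x \<in> B - M q" using x by blast
    qed
    hence "\<tau> ?D \<le> \<tau> N"
      using N rational_level_fun_superlevel_sets[OF B] t by (intro sigma_maxitive_mono[OF tm]) auto
    thus ?thesis using N by simp
  qed (rule min.coboundedI1)
qed

lemma le_sugeno_integral_rational_level_fun:
  assumes B: "B \<in> BB"
  shows "\<nu> B \<le> (SUP t\<in>{t::real. t \<ge> 0}.
      min (ennreal t) (\<tau> (B \<inter> {x\<in>E. ennreal t < rational_level_fun M x})))"
    (is "_ \<le> ?S")
proof (rule dense_le)
  fix y assume y: "y < \<nu> B"
  then obtain t where t: "y = ennreal t" "0 \<le> t"
    by (cases y) (auto simp: top_unique less_imp_le)
  let ?D = "B \<inter> {x\<in>E. ennreal t < rational_level_fun M x}"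
  have DB: "?D \<in> BB" using rational_level_fun_superlevel_sets[OF B t(2)] .
  have KB: "B - ?D \<in> BB" using B DB by blast
  have "\<nu> (B - ?D) \<le> ennreal t"
  proof (rule le_ennreal_if_le_Rats_greater[OF t(2)])
    fix s assume s: "s \<in> \<rat>" "t < s"
    have "B - ?D \<subseteq> M s"
    proof
      fix x assume "x \<in> B - ?D"
      hence "rational_level_fun M x \<le> ennreal t" using sets_into_space[OF B] by (auto simp: not_less)
      thus "x \<in> M s" using rational_level_fun_le_iff[OF M_mono t(2)] s by blast
    qed
    hence "\<nu> (B - ?D) \<le> \<nu> (M s)" using KB M_sets by (intro sigma_maxitive_mono[OF nm])
    also have "\<dots> \<le> ennreal s" by (rule M_bound)
    finally show "\<nu> (B - ?D) \<le> ennreal s" .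
  qed
  moreover have "\<nu> B = max (\<nu> (B - ?D)) (\<nu> ?D)"
    using sigma_maxitive_Un[OF nm KB DB] by (simp add: Un_absorb2)
  ultimately have "ennreal t < \<nu> ?D" using y t by (auto simp: less_max_iff_disj not_le[symmetric])
  also have "\<nu> ?D \<le> \<tau> ?D" using ac[OF DB] .
  finally have "y = min (ennreal t) (\<tau> ?D)" using t by simp
  also have "\<dots> \<le> ?S" using t by (intro SUP_upper) auto
  finally show "y \<le> ?S" .
qed

lemma has_sugeno_density_rational_level_fun: "has_sugeno_density E BB \<nu> \<tau> (rational_level_fun M)"
  unfolding has_sugeno_density_def
  using sugeno_integral_rational_level_fun_le le_sugeno_integral_rational_level_fun
  by (blast intro: antisym)

end

lemma radon_nikodym_sugeno_if_sigma_principal: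
  assumes sa: "sigma_algebra E BB" and tm: "sigma_maxitive BB \<tau>"
    and sp: "sigma_principal BB \<tau>"
  shows "radon_nikodym_sugeno E BB \<tau>"
  unfolding radon_nikodym_sugeno_def
proof (intro allI impI)
  interpret sigma_algebra E BB by (rule sa)
  fix \<nu> assume "sigma_maxitive BB \<nu> \<and> abs_cont_min BB \<nu> \<tau>"
  hence nm: "sigma_maxitive BB \<nu>" and ac: "\<And>B. B \<in> BB \<Longrightarrow> \<nu> B \<le> \<tau> B"
    unfolding abs_cont_min_def by auto
  define sublevel where "sublevel q = {S\<in>BB. \<nu> S \<le> ennreal q}" for q
  have "\<exists>L\<in>sublevel q. \<forall>S\<in>sublevel q. negligible_wrt BB \<tau> (S - L)" for q
    unfolding sublevel_def
    by (rule sp[unfolded sigma_principal_def, rule_format, OF sigma_ideal_sublevel[OF sa nm]])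
  then obtain L where "\<And>q. L q \<in> sublevel q" "\<And>q. \<forall>S\<in>sublevel q. negligible_wrt BB \<tau> (S - L q)"
    by metis
  hence L: "\<And>q. L q \<in> BB" "\<And>q. \<nu> (L q) \<le> ennreal q"
      "\<And>q S. S \<in> BB \<Longrightarrow> \<nu> S \<le> ennreal q \<Longrightarrow> negligible_wrt BB \<tau> (S - L q)"
    unfolding sublevel_def by auto
  define M where "M q = (\<Union>r\<in>{r\<in>\<rat>. 0 \<le> r \<and> r \<le> q}. L r)" for q
  have countable: "countable {r\<in>\<rat>. 0 \<le> r \<and> r \<le> q}" for q :: real
    by (rule countable_subset[OF _ countable_rat]) auto
  have M_sets: "M q \<in> BB" for q
    unfolding M_def using countable L(1) by (intro countable_UN') auto
  have M_bound: "\<nu> (M q) \<le> ennreal q" for q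
  proof -
    have "\<nu> (M q) = (SUP r\<in>{r\<in>\<rat>. 0 \<le> r \<and> r \<le> q}. \<nu> (L r))"
      unfolding M_def using countable L(1) by (intro sigma_maxitive_UN[OF nm]) auto
    also have "\<dots> \<le> ennreal q"
    proof (rule SUP_least)
      fix r assume "r \<in> {r\<in>\<rat>. 0 \<le> r \<and> r \<le> q}"
      hence "ennreal r \<le> ennreal q" by (simp add: ennreal_leI)
      thus "\<nu> (L r) \<le> ennreal q" using L(2)[of r] by (rule order.trans[rotated])
    qed
    finally show ?thesis .
  qed
  have M_mono: "mono M" by (auto simp: mono_def M_def)
  have M_exhausts: "negligible_wrt BB \<tau> (S - M q)"
    if q: "q \<in> \<rat>" "0 \<le> q" and S: "S \<in> BB" "\<nu> S \<le> ennreal q" for q S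
  proof -
    obtain N where "N \<in> BB" "S - L q \<subseteq> N" "\<tau> N = 0"
      using L(3)[OF S] unfolding negligible_wrt_def by blast
    moreover have "L q \<subseteq> M q" using q by (auto simp: M_def)
    ultimately show ?thesis unfolding negligible_wrt_def by blast
  qed
  show "\<exists>c. B_measurable E BB c \<and> has_sugeno_density E BB \<nu> \<tau> c"
    using B_measurable_rational_level_fun[OF sa M_mono M_sets]
      has_sugeno_density_rational_level_fun[OF sa tm nm ac M_mono M_sets M_bound M_exhausts]
    by blast
qed

theorem mainTheorem3:
  fixes E :: "'a set" and BB :: "'a set set" and \<tau> :: "'a set \<Rightarrow> ennreal"
  assumes "E \<noteq> {}"
    and "sigma_algebra E BB"
    and "sigma_maxitive BB \<tau>"
  shows "radon_nikodym_sugeno E BB \<tau> \<longleftrightarrow> sigma_principal BB \<tau>"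
  using sigma_principal_if_radon_nikodym_sugeno[OF assms(2,3)]
    radon_nikodym_sugeno_if_sigma_principal[OF assms(2,3)] by blast

end
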